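(* Let $p\ge1$ and $\Gamma=\{(s,|s|^p):s\in\mathbb{R}\}$. There exists a set $E\subset[-\pi/2,\pi/2)^2$ of positive Lebesgue measure such that for every $(\theta_1,\theta_2)\in E$, $(\Gamma,\ell_{\theta_1}\cup\ell_{\theta_2})$ is a Heisenberg Uniqueness Pair.
   Context: For a finite complex Borel measure $\mu$ on $\mathbb{R}^2$, $\widehat{\mu}(x,y)=\int_{\mathbb{R}^2}e^{-i(xs+yt)}\,d\mu(s,t)$. For an angle $\theta$, $\ell_\theta=\{t(\cos\theta,\sin\theta):t\in\mathbb{R}\}$. $\mathcal{AC}(\Gamma)$ is the set of finite complex measures supported on $\Gamma$ and absolutely continuous with respect to arc length on $\Gamma$. For $\Lambda\subset\mathbb{R}^2$, $(\Gamma,\Lambda)$ is a Heisenberg Uniqueness Pair if every $\mu\in\mathcal{AC}(\Gamma)$ with $\widehat{\mu}=0$ on $\Lambda$ satisfies $\mu=0$. *)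

theory Defs
  imports "HOL-Analysis.Analysis"
begin

definition Gamma :: "real \<Rightarrow> (real \<times> real) set" where
  "Gamma p = {(s, \<bar>s\<bar> powr p) | s. True}"

text \<open>Arc-length measure on Gamma_p, as a measure on the plane: the push-forward of
  sqrt(1 + phi'(s)^2) ds under s \<mapsto> (s, |s|^p), where phi(s) = |s|^p and
  phi'(s)^2 = p^2 |s|^(2(p-1)) (for s \<noteq> 0; the value at s = 0 is irrelevant).\<close>
definition arclen :: "real \<Rightarrow> (real \<times> real) measure" where
  "arclen p = distr (density lborel (\<lambda>s. ennreal (sqrt (1 + p\<^sup>2 * \<bar>s\<bar> powr (2 * (p - 1))))))
                    borel (\<lambda>s. (s, \<bar>s\<bar> powr p))"

text \<open>A measure mu in AC(Gamma) is d mu = f d(arclen), f integrable w.r.t. arc length.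
  Its Fourier transform: mu^(x,y) = integral of e^{-i(xs+yt)} d mu(s,t).\<close>
definition ft :: "real \<Rightarrow> (real \<times> real \<Rightarrow> complex) \<Rightarrow> real \<times> real \<Rightarrow> complex" where
  "ft p f = (\<lambda>(x, y). LINT z | arclen p. f z * cis (- (x * fst z + y * snd z)))"

definition line :: "real \<Rightarrow> (real \<times> real) set" where
  "line \<theta> = {(t * cos \<theta>, t * sin \<theta>) | t. True}"

definition HUP :: "real \<Rightarrow> (real \<times> real) set \<Rightarrow> bool" where
  "HUP p \<Lambda> \<longleftrightarrow> (\<forall>f :: real \<times> real \<Rightarrow> complex.
      integrable (arclen p) f \<and> (\<forall>w\<in>\<Lambda>. ft p f w = 0) \<longrightarrow> (AE z in arclen p. f z = 0))"

end

theory Submission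
  imports Defs "HOL-Probability.Levy"
begin

text \<open>
  Pulled back along s \<mapsto> (s, |s|^p), a measure in AC(\<Gamma>) becomes F(s) ds with F integrable on
  the line, and its Fourier transform on the line of angle \<theta> is the characteristic function of
  the pushforward of F(s) ds under h_\<theta>(s) = s cos \<theta> + |s|^p sin \<theta>. By Levy's uniqueness
  theorem this pushforward vanishes (for Re F and Im F separately).

  For p = 1 and 0 < \<theta> < \<pi>/4 the map h_\<theta> is injective, so F = 0. For p > 1 take
  \<theta>1 \<in> (0, \<pi>/4) and \<theta>2 \<in> (-\<pi>/4, 0). The map h_\<theta>1 pairs each x > 0 with a point
  -y < 0 of the same value, so a Borel set B \<subseteq> (0, \<infinity>) and its mirror image carry
  opposite F-masses; the same holds for h_\<theta>2 with the half-lines exchanged. Composing the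
  two mirrors gives a continuous increasing map \<Phi> of (0, \<infinity>) with \<Phi> s > s that preserves
  F-mass. The images of a fundamental domain [a, \<Phi> a) under the iterates of \<Phi> are disjoint
  and have equal mass, which integrability forces to be 0. Hence F = 0 on (0, \<infinity>), and on
  (-\<infinity>, 0) by symmetry. The set E is the rectangle (0, \<pi>/4) \<times> (-\<pi>/4, 0).
\<close>

section \<open>Fourier uniqueness for pushforward measures\<close>

lemma borel_measurable_cis [measurable (raw)]:
  "f \<in> borel_measurable M \<Longrightarrow> (\<lambda>x. cis (f x)) \<in> borel_measurable M"
  unfolding cis_conv_exp by measurable

context
  fixes M :: "'a measure" and g h :: "'a \<Rightarrow> real"
  assumes g: "integrable M g" "\<And>x. 0 \<le> g x" and h[measurable]: "h \<in> borel_measurable M"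
begin

lemma emeasure_distr_density:
  assumes [measurable]: "A \<in> sets borel"
  shows "emeasure (distr (density M g) borel h) A = (LINT x|M. indicator A (h x) * g x)"
proof -
  have [measurable]: "g \<in> borel_measurable M"
    using g(1) by simp
  have "emeasure (distr (density M g) borel h) A = (\<integral>\<^sup>+ x. ennreal (indicator A (h x) * g x) \<partial>M)"
    by (simp add: emeasure_distr emeasure_density) (intro nn_integral_cong, simp split: split_indicator)
  also have "\<dots> = ennreal (LINT x|M. indicator A (h x) * g x)"
    using g by (intro nn_integral_eq_integral Bochner_Integration.integrable_bound[OF g(1)])
      (auto split: split_indicator)
  finally show ?thesis .
qed

lemma real_distribution_distr_density:
  assumes "(LINT x|M. g x) = 1"
  shows "real_distribution (distr (density M g) borel h)"
proof -
  have "prob_space (distr (density M g) borel h)"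
    using emeasure_distr_density[of UNIV] assms by (intro prob_spaceI) simp
  then show ?thesis
    by (simp add: real_distribution_def real_distribution_axioms_def)
qed

lemma char_distr_density: "char (distr (density M g) borel h) t = (CLINT x|M. g x * cis (t * h x))"
proof -
  have "char (distr (density M g) borel h) t = (CLINT x|density M g. iexp (t * h x))"
    unfolding char_def by (subst integral_distr) auto
  also have "\<dots> = (CLINT x|M. g x *\<^sub>R iexp (t * h x))"
    using g by (subst integral_density) auto
  finally show ?thesis
    by (simp add: scaleR_conv_of_real cis_conv_exp)
qed

end

lemma integrable_mult_cis:
  fixes f :: "'a \<Rightarrow> complex"
  assumes "integrable M f" "g \<in> borel_measurable M"
  shows "integrable M (\<lambda>x. f x * cis (g x))"
  using assms by (intro Bochner_Integration.integrable_bound[OF assms(1)]) (auto simp: norm_mult)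

lemma pushforward_integral_eq_if_fourier_eq:
  fixes g1 g2 h :: "'a \<Rightarrow> real"
  assumes g1: "integrable M g1" "\<And>x. 0 \<le> g1 x" and g2: "integrable M g2" "\<And>x. 0 \<le> g2 x"
    and h[measurable]: "h \<in> borel_measurable M"
    and fourier: "\<And>t. (CLINT x|M. g1 x * cis (t * h x)) = (CLINT x|M. g2 x * cis (t * h x))"
    and A[measurable]: "A \<in> sets borel"
  shows "(LINT x|M. indicator A (h x) * g1 x) = (LINT x|M. indicator A (h x) * g2 x)"
proof -
  have [measurable]: "g1 \<in> borel_measurable M" "g2 \<in> borel_measurable M"
    using g1 g2 by simp_all
  define a where "a = (LINT x|M. g1 x)"
  have a_eq: "(LINT x|M. g2 x) = a"
    using fourier[of 0] unfolding a_def by simp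
  show ?thesis
  proof (cases "a = 0")
    case True
    then have "AE x in M. g1 x = 0" "AE x in M. g2 x = 0"
      using g1 g2 a_eq True unfolding a_def by (simp_all add: integral_nonneg_eq_0_iff_AE)
    then show ?thesis
      by (intro integral_cong_AE) (measurable, measurable, auto)
  next
    case False
    then have "a > 0"
      unfolding a_def using g1 by (simp add: order_neq_le_trans integral_nonneg_AE)
    define N1 N2 where "N1 = distr (density M (\<lambda>x. g1 x / a)) borel h"
      and "N2 = distr (density M (\<lambda>x. g2 x / a)) borel h"
    note distr_facts = emeasure_distr_density real_distribution_distr_density char_distr_density
    have densities: "integrable M (\<lambda>x. g1 x / a)" "\<And>x. 0 \<le> g1 x / a"
      "integrable M (\<lambda>x. g2 x / a)" "\<And>x. 0 \<le> g2 x / a"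
      using g1 g2 \<open>a > 0\<close> by auto
    note N1_facts = distr_facts[OF densities(1,2) h, folded N1_def]
    note N2_facts = distr_facts[OF densities(3,4) h, folded N2_def]
    have "char N1 t = (CLINT x|M. g1 x * cis (t * h x)) / a"
      and "char N2 t = (CLINT x|M. g2 x * cis (t * h x)) / a" for t
      unfolding N1_facts(3) N2_facts(3) by (simp_all add: divide_inverse mult.commute mult.left_commute)
    then have "char N1 = char N2"
      using fourier by auto
    then have "N1 = N2"
      using N1_facts(2) N2_facts(2) \<open>a > 0\<close> a_eq by (intro Levy_uniqueness) (auto simp: a_def)
    then show ?thesis
      using N1_facts(1)[OF A] N2_facts(1)[OF A] g1 g2 \<open>a > 0\<close> by (simp add: integral_nonneg_AE)
  qed
qed

lemma pushforward_integral_eq_0_if_fourier_eq_0: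
  fixes G h :: "'a \<Rightarrow> real"
  assumes G: "integrable M G" and h[measurable]: "h \<in> borel_measurable M"
    and fourier: "\<And>t. (CLINT x|M. G x * cis (t * h x)) = 0"
    and A[measurable]: "A \<in> sets borel"
  shows "(LINT x|M. indicator A (h x) * G x) = 0"
proof -
  define Gp Gn where "Gp x = max (G x) 0" and "Gn x = max (- G x) 0" for x
  have int: "integrable M Gp" "integrable M Gn"
    using G unfolding Gp_def Gn_def by auto
  have G_eq: "G x = Gp x - Gn x" for x
    unfolding Gp_def Gn_def by auto
  have "(CLINT x|M. Gp x * cis (t * h x)) = (CLINT x|M. Gn x * cis (t * h x))" for t
    using fourier[of t] integrable_mult_cis[OF integrable_of_real[OF int(1)]]
      integrable_mult_cis[OF integrable_of_real[OF int(2)]]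
    by (simp add: G_eq left_diff_distrib)
  then have "(LINT x|M. indicator A (h x) * Gp x) = (LINT x|M. indicator A (h x) * Gn x)"
    by (intro pushforward_integral_eq_if_fourier_eq[OF int(1) _ int(2)]) (auto simp: Gp_def Gn_def)
  moreover have "integrable M (\<lambda>x. indicator A (h x) * f x)" if "integrable M f" for f :: "'a \<Rightarrow> real"
    using that by (intro Bochner_Integration.integrable_bound[OF that]) (auto split: split_indicator)
  ultimately show ?thesis
    using int unfolding G_eq by (simp add: right_diff_distrib)
qed

lemma fourier_Re_eq_0:
  fixes F :: "'a \<Rightarrow> complex" and h :: "'a \<Rightarrow> real"
  assumes F: "integrable M F" and h[measurable]: "h \<in> borel_measurable M"
    and fourier: "\<And>t. (CLINT x|M. F x * cis (t * h x)) = 0"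
  shows "(CLINT x|M. Re (F x) * cis (t * h x)) = 0"
proof -
  have "(CLINT x|M. Re (F x) * cis (t * h x))
      = (CLINT x|M. (F x * cis (t * h x) + cnj (F x * cis (- t * h x))) / 2)"
    by (intro Bochner_Integration.integral_cong) (simp_all add: cis_cnj complex_eq_iff)
  also have "\<dots> = ((CLINT x|M. F x * cis (t * h x)) + cnj (CLINT x|M. F x * cis (- t * h x))) / 2"
    using integrable_mult_cis[OF F, of "\<lambda>x. t * h x"] integrable_mult_cis[OF F, of "\<lambda>x. - t * h x"]
    by (simp del: mult_minus_left complex_cnj_mult)
  also have "\<dots> = 0"
    using fourier[of t] fourier[of "- t"] by simp
  finally show ?thesis .
qed

section \<open>Reduction to signed measures on the real line\<close>

definition null_pushforward :: "(real \<Rightarrow> real) \<Rightarrow> (real \<Rightarrow> real) \<Rightarrow> bool" where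
  "null_pushforward h G \<longleftrightarrow> (\<forall>A\<in>sets borel. (LBINT s:h -` A. G s) = 0)"

lemma null_pushforward_Re_Im_if_fourier_eq_0:
  fixes F :: "real \<Rightarrow> complex"
  assumes F: "integrable lborel F" and h[measurable]: "h \<in> borel_measurable borel"
    and fourier: "\<And>t. (CLINT s|lborel. F s * cis (t * h s)) = 0"
  shows "null_pushforward h (\<lambda>s. Re (F s))" "null_pushforward h (\<lambda>s. Im (F s))"
proof -
  have null_pushforward_Re: "null_pushforward h (\<lambda>s. Re (F' s))"
    if "integrable lborel F'" "\<And>t. (CLINT s|lborel. F' s * cis (t * h s)) = 0" for F'
    using pushforward_integral_eq_0_if_fourier_eq_0[of lborel "\<lambda>s. Re (F' s)" h]
      fourier_Re_eq_0[of lborel F' h] that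
    by (simp add: null_pushforward_def set_lebesgue_integral_def indicator_vimage)
  show "null_pushforward h (\<lambda>s. Re (F s))"
    using null_pushforward_Re[OF F fourier] .
  have "null_pushforward h (\<lambda>s. Re (- \<i> * F s))"
    using F fourier by (intro null_pushforward_Re) (simp_all add: mult.assoc)
  then show "null_pushforward h (\<lambda>s. Im (F s))"
    by simp
qed

lemma HUP_if_parametrized_uniqueness:
  fixes p :: real and \<Lambda> :: "(real \<times> real) set"
  assumes uniqueness: "\<And>F. integrable lborel F \<Longrightarrow>
      (\<And>x y. (x, y) \<in> \<Lambda> \<Longrightarrow> (CLBINT s. F s * cis (- (x * s + y * \<bar>s\<bar> powr p))) = 0) \<Longrightarrow>
      AE s in lborel. F s = 0"
  shows "HUP p \<Lambda>"
  unfolding HUP_def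
proof (intro allI impI, elim conjE)
  fix f :: "real \<times> real \<Rightarrow> complex"
  assume f: "integrable (arclen p) f" and ft_vanishes: "\<forall>w\<in>\<Lambda>. ft p f w = 0"
  define w where "w s = sqrt (1 + p\<^sup>2 * \<bar>s\<bar> powr (2 * (p - 1)))" for s :: real
  define \<gamma> where "\<gamma> s = (s, \<bar>s\<bar> powr p)" for s :: real
  have [measurable]: "w \<in> borel_measurable borel" "\<gamma> \<in> borel \<rightarrow>\<^sub>M borel"
    unfolding w_def \<gamma>_def by measurable
  have w_pos: "w s > 0" for s
    unfolding w_def by (intro real_sqrt_gt_zero add_pos_nonneg) auto
  have arclen_eq: "arclen p = distr (density lborel w) borel \<gamma>"
    unfolding arclen_def w_def \<gamma>_def ..
  have [measurable]: "f \<in> borel_measurable borel"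
    using f unfolding arclen_eq by simp
  define F where "F s = w s *\<^sub>R f (\<gamma> s)" for s
  have "integrable lborel F"
    using f unfolding arclen_eq F_def
    by (subst (asm) integrable_distr_eq) (auto simp: integrable_density w_pos less_imp_le)
  then have "AE s in lborel. F s = 0"
  proof (rule uniqueness)
    fix x y assume "(x, y) \<in> \<Lambda>"
    have [measurable]: "(\<lambda>z. - (x * fst z + y * snd z)) \<in> borel_measurable (borel :: (real \<times> real) measure)"
      by (intro borel_measurable_continuous_onI continuous_intros)
    from \<open>(x, y) \<in> \<Lambda>\<close> have "0 = (CLINT z|arclen p. f z * cis (- (x * fst z + y * snd z)))"
      using ft_vanishes unfolding ft_def by auto
    also have "\<dots> = (CLINT s|density lborel w. f (\<gamma> s) * cis (- (x * fst (\<gamma> s) + y * snd (\<gamma> s))))"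
      unfolding arclen_eq by (rule integral_distr) measurable
    also have "\<dots> = (CLBINT s. F s * cis (- (x * s + y * \<bar>s\<bar> powr p)))"
      by (subst integral_density) (auto simp: F_def \<gamma>_def w_pos less_imp_le)
    finally show "(CLBINT s. F s * cis (- (x * s + y * \<bar>s\<bar> powr p))) = 0" ..
  qed
  then have "AE s in lborel. f (\<gamma> s) = 0"
    by eventually_elim (simp add: F_def w_pos[THEN less_imp_neq, symmetric])
  then have "AE s in density lborel w. f (\<gamma> s) = 0"
    by (subst AE_density) (auto elim: AE_mp)
  then show "AE z in arclen p. f z = 0"
    unfolding arclen_eq by (subst AE_distr_iff) auto
qed

lemma null_pushforward_if_fourier_vanishes_on_line:
  fixes F :: "real \<Rightarrow> complex"
  assumes F: "integrable lborel F"
    and vanishes: "\<And>x y. (x, y) \<in> line \<theta> \<Longrightarrow> (CLBINT s. F s * cis (- (x * s + y * \<bar>s\<bar> powr p))) = 0"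
  defines "h s \<equiv> cos \<theta> * s + sin \<theta> * \<bar>s\<bar> powr p"
  shows "null_pushforward h (\<lambda>s. Re (F s))" "null_pushforward h (\<lambda>s. Im (F s))"
proof -
  have "(CLBINT s. F s * cis (t * h s)) = 0" for t
  proof -
    have "(- t * cos \<theta>, - t * sin \<theta>) \<in> line \<theta>"
      unfolding line_def by blast
    from vanishes[OF this] show ?thesis
      unfolding h_def by (simp add: algebra_simps)
  qed
  then show "null_pushforward h (\<lambda>s. Re (F s))" "null_pushforward h (\<lambda>s. Im (F s))"
    using F unfolding h_def by (intro null_pushforward_Re_Im_if_fourier_eq_0; simp)+
qed

section \<open>Signed measures with vanishing pushforward\<close>

lemma AE_eq_0_if_set_integrals_eq_0:
  fixes G :: "'a \<Rightarrow> real"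
  assumes G: "integrable M G" and S[measurable]: "S \<in> sets M"
    and vanish: "\<And>B. B \<in> sets M \<Longrightarrow> B \<subseteq> S \<Longrightarrow> (LINT x:B|M. G x) = 0"
  shows "AE x in M. x \<in> S \<longrightarrow> G x = 0"
proof -
  have [measurable]: "G \<in> borel_measurable M"
    using G by simp
  have AE_sign: "AE x in M. indicator B x * G x = 0"
    if B: "B \<in> sets M" "B \<subseteq> S" and sign: "\<And>x. x \<in> B \<Longrightarrow> 0 \<le> \<sigma> * G x" and "\<sigma> \<noteq> 0"
    for B and \<sigma> :: real
  proof -
    have "integrable M (\<lambda>x. \<sigma> * (indicator B x * G x))"
      using B G by (auto intro: integrable_real_mult_indicator simp: mult.commute)
    moreover have "(LINT x|M. \<sigma> * (indicator B x * G x)) = 0"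
      using vanish[OF B] by (simp add: set_lebesgue_integral_def)
    ultimately have "AE x in M. \<sigma> * (indicator B x * G x) = 0"
      using sign by (subst integral_nonneg_eq_0_iff_AE[symmetric]) (auto split: split_indicator)
    then show ?thesis
      using \<open>\<sigma> \<noteq> 0\<close> by simp
  qed
  have "AE x in M. indicator {x\<in>S. G x > 0} x * G x = 0"
    by (rule AE_sign[of _ 1]) auto
  moreover have "AE x in M. indicator {x\<in>S. G x < 0} x * G x = 0"
    by (rule AE_sign[of _ "-1"]) auto
  ultimately show ?thesis
  proof eventually_elim
    case (elim x)
    then show ?case
      by (cases "G x" "0 :: real" rule: linorder_cases) (auto simp: indicator_def)
  qed
qed

lemma set_integral_eq_0_if_disjoint_copies:
  fixes G :: "'a \<Rightarrow> real" and X :: "nat \<Rightarrow> 'a set"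
  assumes G: "integrable M G" and X: "\<And>n. X n \<in> sets M" "disjoint_family X"
    and copies: "\<And>n. (LINT x:X n|M. G x) = m"
  shows "m = 0"
proof (rule ccontr)
  assume "m \<noteq> 0"
  obtain N where N: "(LINT x|M. \<bar>G x\<bar>) / \<bar>m\<bar> < real N"
    using reals_Archimedean2 by blast
  have set_integrable: "set_integrable M B G" if "B \<in> sets M" for B
    using that G unfolding set_integrable_def by (rule integrable_mult_indicator)
  have "AE x in M. x \<in> X i \<and> x \<in> X j \<longrightarrow> i = j" for i j
    using X(2) by (intro AE_I2) (auto simp: disjoint_family_on_def)
  then have "real N * m = (LINT x:(\<Union>n<N. X n)|M. G x)"
    using X set_integrable copies by (subst set_integral_finite_UN_AE) auto
  also have "\<bar>\<dots>\<bar> \<le> (LINT x:(\<Union>n<N. X n)|M. \<bar>G x\<bar>)"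
    using set_integral_norm_bound[OF set_integrable[of "\<Union>n<N. X n"]] X by auto
  also have "\<dots> \<le> (LINT x|M. \<bar>G x\<bar>)"
    using G X unfolding set_lebesgue_integral_def
    by (intro integral_mono integrable_mult_indicator) (auto split: split_indicator)
  finally show False
    using N \<open>m \<noteq> 0\<close> by (simp add: abs_mult field_simps)
qed

lemma AE_eq_0_if_null_pushforward_injective:
  assumes G: "integrable lborel G" and null: "null_pushforward h G"
    and k: "k \<in> borel_measurable borel" "\<And>x. k (h x) = x"
  shows "AE s in lborel. G s = 0"
proof -
  have "AE s in lborel. s \<in> UNIV \<longrightarrow> G s = 0"
  proof (rule AE_eq_0_if_set_integrals_eq_0[OF G])
    fix B :: "real set" assume "B \<in> sets lborel"
    then have "(LBINT s:h -` (k -` B). G s) = 0"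
      using null k(1) unfolding null_pushforward_def by (simp add: measurable_sets_borel)
    then show "(LBINT s:B. G s) = 0"
      using k(2) by (simp add: vimage_def)
  qed simp
  then show ?thesis
    by simp
qed

lemma set_integral_uminus_image:
  fixes G :: "real \<Rightarrow> 'a::{banach, second_countable_topology}"
  shows "(LBINT s:uminus ` B. G s) = (LBINT s:B. G (- s))"
proof -
  have "{s. - s \<in> uminus ` B} = B"
    by force
  then show ?thesis
    using set_integral_reflect[of "uminus ` B" G] by simp
qed

lemma lborel_integrable_uminus:
  fixes G :: "real \<Rightarrow> 'a::{banach, second_countable_topology}"
  shows "integrable lborel G \<Longrightarrow> integrable lborel (\<lambda>s. G (- s))"
  using lborel_integrable_real_affine_iff[of "-1" G 0] by simp

lemma null_pushforward_reflect:
  assumes "null_pushforward f G"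
  shows "null_pushforward (\<lambda>x. - f (- x)) (\<lambda>s. G (- s))"
  unfolding null_pushforward_def
proof
  fix A :: "real set" assume "A \<in> sets borel"
  then have "uminus -` A \<in> sets borel"
    by (rule measurable_sets_borel[rotated]) measurable
  then have "(LBINT s:f -` (uminus -` A). G s) = 0"
    using assms unfolding null_pushforward_def by blast
  then show "(LBINT s:(\<lambda>x. - f (- x)) -` A. G (- s)) = 0"
    by (subst (asm) set_integral_reflect) (simp add: vimage_def)
qed

context
  fixes G \<Phi> :: "real \<Rightarrow> real"
  assumes G: "integrable lborel G"
    and expanding: "\<And>s. 0 < s \<Longrightarrow> s < \<Phi> s"
    and mono: "strict_mono_on {0<..} \<Phi>"
    and invariant: "\<And>B. B \<in> sets borel \<Longrightarrow> B \<subseteq> {0<..} \<Longrightarrow>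
      \<Phi> ` B \<in> sets borel \<and> (LBINT s:\<Phi> ` B. G s) = (LBINT s:B. G s)"
begin

lemma funpow_pos: "0 < a \<Longrightarrow> 0 < (\<Phi> ^^ n) a"
  using expanding by (induction n) (auto intro: order.strict_trans)

lemma image_fundamental_domain:
  assumes "0 < a"
  shows "\<Phi> ` {a..<\<Phi> a} \<subseteq> {\<Phi> a..<\<Phi> (\<Phi> a)}"
proof
  fix y assume "y \<in> \<Phi> ` {a..<\<Phi> a}"
  then obtain x where x: "a \<le> x" "x < \<Phi> a" "y = \<Phi> x"
    by auto
  then have "0 < x" "0 < \<Phi> a"
    using assms expanding[OF assms] by linarith+
  then show "y \<in> {\<Phi> a..<\<Phi> (\<Phi> a)}"
    using strict_mono_on_leD[OF mono, of a x] strict_mono_onD[OF mono, of x "\<Phi> a"] x assms by auto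
qed

lemma funpow_image_fundamental_domain:
  assumes "0 < a" "B \<in> sets borel" "B \<subseteq> {a..<\<Phi> a}"
  shows "(\<Phi> ^^ n) ` B \<subseteq> {(\<Phi> ^^ n) a..<(\<Phi> ^^ Suc n) a} \<and> (\<Phi> ^^ n) ` B \<in> sets borel \<and>
    (LBINT s:(\<Phi> ^^ n) ` B. G s) = (LBINT s:B. G s)"
proof (induction n)
  case 0
  then show ?case
    using assms by simp
next
  case (Suc n)
  then have "(\<Phi> ^^ n) ` B \<subseteq> {0<..}"
    using funpow_pos[OF assms(1), of n] by fastforce
  moreover have "\<Phi> ` (\<Phi> ^^ n) ` B \<subseteq> {(\<Phi> ^^ Suc n) a..<(\<Phi> ^^ Suc (Suc n)) a}"
    using Suc.IH image_fundamental_domain[OF funpow_pos[OF assms(1), of n]] by fastforce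
  ultimately show ?case
    using Suc.IH invariant[of "(\<Phi> ^^ n) ` B"] by (simp add: image_comp)
qed

lemma set_integral_fundamental_domain_eq_0:
  assumes "0 < a" "B \<in> sets borel" "B \<subseteq> {a..<\<Phi> a}"
  shows "(LBINT s:B. G s) = 0"
proof (rule set_integral_eq_0_if_disjoint_copies[OF G, of "\<lambda>n. (\<Phi> ^^ n) ` B"])
  note domains = funpow_image_fundamental_domain[OF assms]
  have "strict_mono (\<lambda>n. (\<Phi> ^^ n) a)"
    using expanding funpow_pos[OF assms(1)] by (intro strict_monoI_Suc) simp
  have "(\<Phi> ^^ m) ` B \<inter> (\<Phi> ^^ n) ` B = {}" if "m < n" for m n
  proof -
    have "(\<Phi> ^^ Suc m) a \<le> (\<Phi> ^^ n) a"
      using strict_mono_less_eq[OF \<open>strict_mono (\<lambda>n. (\<Phi> ^^ n) a)\<close>, of "Suc m" n] that by simp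
    then have "{(\<Phi> ^^ m) a..<(\<Phi> ^^ Suc m) a} \<inter> {(\<Phi> ^^ n) a..<(\<Phi> ^^ Suc n) a} = {}"
      by (auto simp del: funpow.simps)
    then show ?thesis
      using domains[of m] domains[of n] by blast
  qed
  then show "disjoint_family (\<lambda>n. (\<Phi> ^^ n) ` B)"
    unfolding disjoint_family_on_def by (metis Int_commute linorder_neqE_nat)
qed (use funpow_image_fundamental_domain[OF assms] in auto)

lemma exists_rat_fundamental_domain:
  assumes "0 < s" "isCont \<Phi> s"
  shows "\<exists>r\<in>\<rat>. 0 < r \<and> r \<le> s \<and> s < \<Phi> r"
proof -
  have "\<forall>\<^sub>F x in at s. s < \<Phi> x"
    using assms expanding[OF assms(1)] by (simp add: isCont_def order_tendstoD(1))
  then obtain d where "d > 0" and d: "\<And>x. x \<noteq> s \<Longrightarrow> dist x s < d \<Longrightarrow> s < \<Phi> x"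
    unfolding eventually_at by auto
  define a where "a = max (s / 2) (s - d / 2)"
  have a: "0 < a" "a < s" "s < \<Phi> a"
    using \<open>0 < s\<close> \<open>d > 0\<close> d[of a] by (auto simp: a_def dist_real_def)
  obtain r where r: "r \<in> \<rat>" "a < r" "r < s"
    using Rats_dense_in_real[OF \<open>a < s\<close>] by blast
  have "\<Phi> a < \<Phi> r"
    using strict_mono_onD[OF mono, of a r] a r by auto
  then show ?thesis
    using a r by (intro bexI[OF _ \<open>r \<in> \<rat>\<close>]) auto
qed

lemma AE_eq_0_on_pos_if_expanding_invariant:
  assumes continuous: "\<And>s. 0 < s \<Longrightarrow> isCont \<Phi> s"
  shows "AE s in lborel. 0 < s \<longrightarrow> G s = 0"
proof -
  have "AE s in lborel. s \<in> {a..<\<Phi> a} \<longrightarrow> G s = 0" if "0 < a" for a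
    by (rule AE_eq_0_if_set_integrals_eq_0[OF G]) (use set_integral_fundamental_domain_eq_0[OF that] in auto)
  then have "AE s in lborel. \<forall>a \<in> \<rat> \<inter> {0<..}. s \<in> {a..<\<Phi> a} \<longrightarrow> G s = 0"
    using countable_rat by (subst AE_ball_countable) auto
  then show ?thesis
    by eventually_elim (use exists_rat_fundamental_domain continuous in fastforce)
qed

end

section \<open>Inverting the two branches of s \<mapsto> c s + \<sigma> |s|^p\<close>

locale increasing_ray_map =
  fixes f :: "real \<Rightarrow> real" and a :: real
  assumes strict_mono: "strict_mono_on {a..} f"
    and continuous: "continuous_on {a..} f"
    and start: "f a = 0"
    and unbounded: "\<And>u. \<exists>x\<ge>a. u \<le> f x"
begin

lemma inj: "inj_on f {a<..}"
  using strict_mono by (rule strict_mono_on_imp_inj_on[THEN inj_on_subset]) auto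

lemma image_eq: "f ` {a<..} = {0<..}"
proof (intro antisym subsetI)
  fix u assume "u \<in> f ` {a<..}"
  then show "u \<in> {0<..}"
    using strict_mono_onD[OF strict_mono, of a] start by auto
next
  fix u :: real assume "u \<in> {0<..}"
  obtain X where "a \<le> X" "u \<le> f X"
    using unbounded by blast
  moreover have "continuous_on {a..X} f"
    using continuous by (rule continuous_on_subset) auto
  ultimately obtain x where "a \<le> x" "x \<le> X" "f x = u"
    using IVT'[of f a u X] start \<open>u \<in> {0<..}\<close> by auto
  moreover have "x \<noteq> a"
    using start \<open>f x = u\<close> \<open>u \<in> {0<..}\<close> by auto
  ultimately show "u \<in> f ` {a<..}"
    by auto
qed

lemma inverse_gt: "0 < u \<Longrightarrow> a < the_inv_into {a<..} f u"
  using the_inv_into_into[OF inj, of u "{a<..}"] image_eq by auto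

lemma f_inverse: "0 < u \<Longrightarrow> f (the_inv_into {a<..} f u) = u"
  using f_the_inv_into_f[OF inj, of u] image_eq by auto

lemma inverse_f: "a < x \<Longrightarrow> the_inv_into {a<..} f (f x) = x"
  using the_inv_into_f_f[OF inj] by auto

lemma inverse_strict_mono: "strict_mono_on {0<..} (the_inv_into {a<..} f)"
proof (rule strict_mono_onI)
  fix u v :: real assume "u \<in> {0<..}" "v \<in> {0<..}" "u < v"
  show "the_inv_into {a<..} f u < the_inv_into {a<..} f v"
  proof (rule ccontr)
    assume "\<not> ?thesis"
    then have "f (the_inv_into {a<..} f v) \<le> f (the_inv_into {a<..} f u)"
      using inverse_gt \<open>u \<in> {0<..}\<close> \<open>v \<in> {0<..}\<close>
      by (intro strict_mono_on_leD[OF strict_mono]) (auto simp: less_imp_le)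
    then show False
      using f_inverse \<open>u \<in> {0<..}\<close> \<open>v \<in> {0<..}\<close> \<open>u < v\<close> by auto
  qed
qed

lemma isCont_inverse:
  assumes "0 < u"
  shows "isCont (the_inv_into {a<..} f) u"
proof -
  define x where "x = the_inv_into {a<..} f u"
  have "a < x" "f x = u"
    using inverse_gt f_inverse assms unfolding x_def by auto
  have "isCont (the_inv_into {a<..} f) (f x)"
  proof (rule isCont_inverse_function2[of "(a + x) / 2" x "x + 1"])
    fix z assume "(a + x) / 2 \<le> z"
    then have "a < z"
      using \<open>a < x\<close> by (simp add: field_simps)
    then show "the_inv_into {a<..} f (f z) = z" "isCont f z"
      using inverse_f continuous_on_interior[OF continuous, of z] by auto
  qed (use \<open>a < x\<close> in auto)
  then show ?thesis
    using \<open>f x = u\<close> by simp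
qed

lemma sets_inverse_preimage:
  assumes "B \<in> sets borel"
  shows "{u. 0 < u \<and> the_inv_into {a<..} f u \<in> B} \<in> sets borel"
proof -
  define k where "k u = (if 0 < u then the_inv_into {a<..} f u else a)" for u
  have "mono k"
  proof (rule monoI)
    fix u v :: real assume "u \<le> v"
    then consider "u \<le> 0" | "0 < u" "0 < v"
      by linarith
    then show "k u \<le> k v"
    proof cases
      case 1
      then show ?thesis
        using inverse_gt[of v] by (auto simp: k_def)
    next
      case 2
      then show ?thesis
        using strict_mono_on_leD[OF inverse_strict_mono] \<open>u \<le> v\<close> by (simp add: k_def)
    qed
  qed
  then have "k -` B \<inter> {0<..} \<in> sets borel"
    using assms by (intro sets.Int measurable_sets_borel[OF borel_measurable_mono]) auto
  also have "k -` B \<inter> {0<..} = {u. 0 < u \<and> the_inv_into {a<..} f u \<in> B}"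
    by (auto simp: k_def)
  finally show ?thesis .
qed

end

locale power_curve =
  fixes p c \<sigma> :: real
  assumes p: "p > 1" and c: "c > 0" and \<sigma>: "\<sigma> > 0"
begin

lemma right_branch: "increasing_ray_map (\<lambda>x. c * x + \<sigma> * x powr p) 0"
proof
  show "strict_mono_on {0..} (\<lambda>x. c * x + \<sigma> * x powr p)"
    using p c \<sigma> by (intro strict_mono_onI add_less_le_mono) (auto intro: powr_mono2)
  show "continuous_on {0..} (\<lambda>x. c * x + \<sigma> * x powr p)"
    using p by (intro continuous_intros continuous_on_powr') auto
  show "\<exists>x\<ge>0. u \<le> c * x + \<sigma> * x powr p" for u
    using c \<sigma> by (intro exI[of _ "max 0 (u / c)"]) (auto simp: field_simps max_def)
qed simp

lemma left_branch_factor: "0 < y \<Longrightarrow> \<sigma> * y powr p - c * y = y * (\<sigma> * y powr (p - 1) - c)"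
  using powr_mult_base[of y "p - 1"] by (simp add: algebra_simps)

lemma left_branch_root: "((c / \<sigma>) powr (1 / (p - 1))) powr (p - 1) = c / \<sigma>"
  using p c \<sigma> by (simp add: powr_powr)

lemma left_branch_pos_imp:
  assumes "0 < y" "0 < \<sigma> * y powr p - c * y"
  shows "(c / \<sigma>) powr (1 / (p - 1)) < y"
proof (rule ccontr)
  assume "\<not> ?thesis"
  then have "y powr (p - 1) \<le> c / \<sigma>"
    using p assms(1) left_branch_root by (metis powr_mono2 diff_ge_0_iff_ge less_imp_le not_less)
  then show False
    using assms \<sigma> left_branch_factor by (simp add: field_simps zero_less_mult_iff)
qed

lemma left_branch_strict_mono:
  "strict_mono_on {(c / \<sigma>) powr (1 / (p - 1))..} (\<lambda>x. \<sigma> * x powr p - c * x)"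
proof (rule strict_mono_onI)
  fix x y assume x: "x \<in> {(c / \<sigma>) powr (1 / (p - 1))..}" and "x < y"
  have "0 < (c / \<sigma>) powr (1 / (p - 1))"
    using c \<sigma> by simp
  then have "0 < x"
    using order.strict_trans2[of 0 "(c / \<sigma>) powr (1 / (p - 1))" x] x by simp
  then have "x powr (p - 1) < y powr (p - 1)"
    using p \<open>x < y\<close> by (intro powr_less_mono2) auto
  then have "\<sigma> * x powr (p - 1) * (y - x) < \<sigma> * (y * y powr (p - 1) - x * x powr (p - 1))"
    using \<sigma> \<open>0 < x\<close> \<open>x < y\<close> by (simp add: algebra_simps)
  moreover have "c \<le> \<sigma> * x powr (p - 1)"
    using x p c \<sigma> powr_mono2[of "p - 1" "(c / \<sigma>) powr (1 / (p - 1))" x] left_branch_root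
    by (simp add: field_simps)
  then have "c * (y - x) \<le> \<sigma> * x powr (p - 1) * (y - x)"
    using \<open>x < y\<close> by (intro mult_right_mono) auto
  moreover have "x powr p = x * x powr (p - 1)" "y powr p = y * y powr (p - 1)"
    using powr_mult_base[of x "p - 1"] powr_mult_base[of y "p - 1"] \<open>0 < x\<close> \<open>x < y\<close> by simp_all
  ultimately show "\<sigma> * x powr p - c * x < \<sigma> * y powr p - c * y"
    by (simp add: algebra_simps)
qed

lemma left_branch_unbounded: "\<exists>x\<ge>(c / \<sigma>) powr (1 / (p - 1)). u \<le> \<sigma> * x powr p - c * x"
proof -
  define X where "X = max (max u 1) (((c + 1) / \<sigma>) powr (1 / (p - 1)))"
  have "(c / \<sigma>) powr (1 / (p - 1)) \<le> X"
    using p c \<sigma> unfolding X_def by (intro max.coboundedI2 powr_mono2) (auto simp: divide_right_mono)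
  have "((c + 1) / \<sigma>) powr (1 / (p - 1)) \<le> X" "u \<le> X" "1 \<le> X"
    unfolding X_def by auto
  then have "(c + 1) / \<sigma> \<le> X powr (p - 1)"
    using p c \<sigma> powr_mono2[of "p - 1" "((c + 1) / \<sigma>) powr (1 / (p - 1))" X] by (simp add: powr_powr)
  then have "1 \<le> \<sigma> * X powr (p - 1) - c"
    using \<sigma> by (simp add: field_simps)
  then have "X \<le> \<sigma> * X powr p - c * X"
    using left_branch_factor[of X] \<open>1 \<le> X\<close> mult_left_mono[of 1 _ X] by simp
  then show ?thesis
    using \<open>(c / \<sigma>) powr (1 / (p - 1)) \<le> X\<close> \<open>u \<le> X\<close> by auto
qed

lemma left_branch: "increasing_ray_map (\<lambda>x. \<sigma> * x powr p - c * x) ((c / \<sigma>) powr (1 / (p - 1)))"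
proof
  have "0 < (c / \<sigma>) powr (1 / (p - 1))"
    using c \<sigma> by simp
  then show "continuous_on {(c / \<sigma>) powr (1 / (p - 1))..} (\<lambda>x. \<sigma> * x powr p - c * x)"
    by (intro continuous_intros) auto
  show "\<sigma> * ((c / \<sigma>) powr (1 / (p - 1))) powr p - c * (c / \<sigma>) powr (1 / (p - 1)) = 0"
    using left_branch_factor[OF \<open>0 < (c / \<sigma>) powr (1 / (p - 1))\<close>] left_branch_root \<sigma> by simp
qed (use left_branch_strict_mono left_branch_unbounded in auto)

interpretation right: increasing_ray_map "\<lambda>x. c * x + \<sigma> * x powr p" 0
  by (rule right_branch)

interpretation left: increasing_ray_map "\<lambda>y. \<sigma> * y powr p - c * y" "(c / \<sigma>) powr (1 / (p - 1))"
  by (rule left_branch)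

text \<open>For x > 0, -mirror x is the negative point at which h s = c s + \<sigma> |s|^p takes the value
  h x: on the negative half-line h (-y) = \<sigma> y^p - c y, which increases from 0 for
  y \<ge> (c/\<sigma>)^(1/(p-1)).\<close>
definition mirror :: "real \<Rightarrow> real" where
  "mirror x =
    the_inv_into {(c / \<sigma>) powr (1 / (p - 1))<..} (\<lambda>y. \<sigma> * y powr p - c * y) (c * x + \<sigma> * x powr p)"

lemma right_branch_pos: "0 < x \<Longrightarrow> 0 < c * x + \<sigma> * x powr p"
  using c \<sigma> by (simp add: add_pos_nonneg)

lemma mirror_gt_root: "0 < x \<Longrightarrow> (c / \<sigma>) powr (1 / (p - 1)) < mirror x"
  using left.inverse_gt[OF right_branch_pos] unfolding mirror_def .

lemma mirror_pos: "0 < x \<Longrightarrow> 0 < mirror x"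
  using mirror_gt_root[of x] c \<sigma> by (simp add: order.strict_trans1[OF powr_ge_zero])

lemma mirror_eq: "0 < x \<Longrightarrow> \<sigma> * mirror x powr p - c * mirror x = c * x + \<sigma> * x powr p"
  using left.f_inverse[OF right_branch_pos] unfolding mirror_def by simp

lemma mirror_gt:
  assumes "0 < x"
  shows "x < mirror x"
proof (rule ccontr)
  assume "\<not> x < mirror x"
  then have "mirror x powr p \<le> x powr p"
    using less_imp_le[OF mirror_pos[OF assms]] p by (intro powr_mono2) auto
  then have "\<sigma> * mirror x powr p \<le> \<sigma> * x powr p"
    using \<sigma> by simp
  moreover have "0 < c * mirror x" "0 < c * x"
    using c mirror_pos[OF assms] assms by simp_all
  ultimately show False
    using mirror_eq[OF assms] by linarith
qed

lemma mirror_strict_mono: "strict_mono_on {0<..} (mirror)"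
proof (rule strict_mono_onI)
  fix x y :: real assume "x \<in> {0<..}" "y \<in> {0<..}" "x < y"
  then have "c * x + \<sigma> * x powr p < c * y + \<sigma> * y powr p"
    by (intro strict_mono_onD[OF right.strict_mono]) auto
  then show "mirror x < mirror y"
    unfolding mirror_def using \<open>x \<in> {0<..}\<close> \<open>y \<in> {0<..}\<close> right_branch_pos
    by (intro strict_mono_onD[OF left.inverse_strict_mono]) auto
qed

lemma isCont_mirror:
  assumes "0 < x"
  shows "isCont (mirror) x"
proof -
  have "isCont (\<lambda>x. c * x + \<sigma> * x powr p) x"
    using assms by (intro continuous_intros) auto
  then show ?thesis
    unfolding mirror_def by (rule isCont_o2) (rule left.isCont_inverse[OF right_branch_pos[OF assms]])
qed

lemma mirror_right_branch_inverse:
  assumes "s < 0" "0 < c * s + \<sigma> * \<bar>s\<bar> powr p"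
  shows "mirror (the_inv_into {0<..} (\<lambda>x. c * x + \<sigma> * x powr p) (c * s + \<sigma> * \<bar>s\<bar> powr p)) = - s"
    (is "mirror ?b = _")
proof -
  have h_s: "c * s + \<sigma> * \<bar>s\<bar> powr p = \<sigma> * (- s) powr p - c * (- s)"
    using assms(1) by simp
  have "(c / \<sigma>) powr (1 / (p - 1)) < - s"
    using assms h_s by (intro left_branch_pos_imp) auto
  have "mirror ?b
      = the_inv_into {(c / \<sigma>) powr (1 / (p - 1))<..} (\<lambda>y. \<sigma> * y powr p - c * y) (c * s + \<sigma> * \<bar>s\<bar> powr p)"
    unfolding mirror_def right.f_inverse[OF assms(2)] ..
  also have "\<dots> = - s"
    unfolding h_s by (rule left.inverse_f) fact
  finally show ?thesis .
qed

lemma vimage_right_branch_inverse: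
  assumes "B \<subseteq> {0<..}"
  shows "(\<lambda>s. c * s + \<sigma> * \<bar>s\<bar> powr p) -` {u. 0 < u \<and> the_inv_into {0<..} (\<lambda>x. c * x + \<sigma> * x powr p) u \<in> B}
    = B \<union> uminus ` mirror ` B" (is "?h -` ?A = _")
proof (intro antisym subsetI)
  fix s assume s: "s \<in> ?h -` ?A"
  then consider "0 < s" | "s < 0"
    using p by (cases s "0 :: real" rule: linorder_cases) auto
  then show "s \<in> B \<union> uminus ` mirror ` B"
  proof cases
    case 1
    then show ?thesis
      using s right.inverse_f by auto
  next
    case 2
    then have "s = - mirror (the_inv_into {0<..} (\<lambda>x. c * x + \<sigma> * x powr p) (?h s))"
      using s mirror_right_branch_inverse by simp
    then show ?thesis
      using s by blast
  qed
next
  fix s assume "s \<in> B \<union> uminus ` mirror ` B"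
  then consider "s \<in> B" | b where "b \<in> B" "s = - mirror b"
    by auto
  then show "s \<in> ?h -` ?A"
  proof cases
    case 1
    then show ?thesis
      using assms right_branch_pos right.inverse_f by auto
  next
    case 2
    then have "0 < b"
      using assms by auto
    then have "?h s = c * b + \<sigma> * b powr p"
      using 2 mirror_eq[OF \<open>0 < b\<close>] mirror_pos[OF \<open>0 < b\<close>] by simp
    then show ?thesis
      using 2 \<open>0 < b\<close> right_branch_pos right.inverse_f by auto
  qed
qed

lemma set_integral_mirror_image:
  assumes G: "integrable lborel G" and null: "null_pushforward (\<lambda>s. c * s + \<sigma> * \<bar>s\<bar> powr p) G"
    and B: "B \<in> sets borel" "B \<subseteq> {0<..}"
  shows "mirror ` B \<in> sets borel" "(LBINT s:mirror ` B. G (- s)) = - (LBINT s:B. G s)"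
proof -
  define h where "h s = c * s + \<sigma> * \<bar>s\<bar> powr p" for s
  define A where "A = {u. 0 < u \<and> the_inv_into {0<..} (\<lambda>x. c * x + \<sigma> * x powr p) u \<in> B}"
  have [measurable]: "h \<in> borel_measurable borel"
    unfolding h_def by measurable
  have "A \<in> sets borel"
    unfolding A_def by (rule right.sets_inverse_preimage[OF B(1)])
  then have "h -` A \<in> sets borel"
    by (rule measurable_sets_borel[rotated]) measurable
  have h_vimage: "h -` A = B \<union> uminus ` mirror ` B"
    unfolding h_def A_def by (rule vimage_right_branch_inverse[OF B(2)])
  have "uminus ` mirror ` B \<subseteq> {..<0}"
    using B(2) mirror_pos by auto
  then have "uminus ` mirror ` B = h -` A \<inter> {..<0}"
    using B(2) unfolding h_vimage by auto
  then have mirror_sets: "uminus ` mirror ` B \<in> sets borel"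
    using \<open>h -` A \<in> sets borel\<close> by auto
  then have "uminus -` (uminus ` mirror ` B) \<in> sets borel"
    by (rule measurable_sets_borel[rotated]) measurable
  moreover have "uminus -` (uminus ` mirror ` B) = mirror ` B"
    by auto
  ultimately show "mirror ` B \<in> sets borel"
    by simp
  have set_integrable: "set_integrable lborel S G" if "S \<in> sets borel" for S
    using that G unfolding set_integrable_def by (intro integrable_mult_indicator) auto
  have "B \<inter> uminus ` mirror ` B \<subseteq> {0<..} \<inter> {..<0}"
    using B(2) \<open>uminus ` mirror ` B \<subseteq> {..<0}\<close> by (rule Int_mono)
  moreover have "{0<..} \<inter> {..<0} = ({} :: real set)"
    by auto
  ultimately have "B \<inter> uminus ` mirror ` B = {}"
    by blast
  moreover have "(LBINT s:h -` A. G s) = 0"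
    using null \<open>A \<in> sets borel\<close> unfolding null_pushforward_def h_def by auto
  ultimately have "(LBINT s:B. G s) + (LBINT s:uminus ` mirror ` B. G s) = 0"
    unfolding h_vimage using B mirror_sets
    by (subst (asm) set_integral_Un) (auto intro: set_integrable)
  then show "(LBINT s:mirror ` B. G (- s)) = - (LBINT s:B. G s)"
    by (simp add: set_integral_uminus_image)
qed

end

lemma AE_pos_eq_0_if_null_pushforward_two_branches:
  fixes p c1 \<sigma>1 c2 \<sigma>2 :: real and G :: "real \<Rightarrow> real"
  assumes p: "p > 1" and pos: "c1 > 0" "\<sigma>1 > 0" "c2 > 0" "\<sigma>2 > 0" and G: "integrable lborel G"
    and null1: "null_pushforward (\<lambda>s. c1 * s + \<sigma>1 * \<bar>s\<bar> powr p) G"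
    and null2: "null_pushforward (\<lambda>s. c2 * s - \<sigma>2 * \<bar>s\<bar> powr p) G"
  shows "AE s in lborel. 0 < s \<longrightarrow> G s = 0"
proof -
  interpret m1: power_curve p c1 \<sigma>1
    using p pos by unfold_locales
  interpret m2: power_curve p c2 \<sigma>2
    using p pos by unfold_locales
  have "(\<lambda>x. - (c2 * - x - \<sigma>2 * \<bar>- x\<bar> powr p)) = (\<lambda>s. c2 * s + \<sigma>2 * \<bar>s\<bar> powr p)"
    by auto
  then have null2': "null_pushforward (\<lambda>s. c2 * s + \<sigma>2 * \<bar>s\<bar> powr p) (\<lambda>s. G (- s))"
    using null_pushforward_reflect[OF null2] by simp
  have G': "integrable lborel (\<lambda>s. G (- s))"
    using G by (rule lborel_integrable_uminus)
  show ?thesis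
  proof (rule AE_eq_0_on_pos_if_expanding_invariant[OF G, of "m2.mirror \<circ> m1.mirror"])
    show "s < (m2.mirror \<circ> m1.mirror) s" if "0 < s" for s
      using m1.mirror_gt[OF that] m2.mirror_gt[OF m1.mirror_pos[OF that]] by simp
    show "strict_mono_on {0<..} (m2.mirror \<circ> m1.mirror)"
      using m1.mirror_pos m1.mirror_strict_mono m2.mirror_strict_mono by (auto simp: strict_mono_on_def)
    show "isCont (m2.mirror \<circ> m1.mirror) s" if "0 < s" for s
      using m1.isCont_mirror[OF that] m2.isCont_mirror[OF m1.mirror_pos[OF that]]
      unfolding comp_def by (rule isCont_o2)
    show "(m2.mirror \<circ> m1.mirror) ` B \<in> sets borel \<and>
        (LBINT s:(m2.mirror \<circ> m1.mirror) ` B. G s) = (LBINT s:B. G s)"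
      if "B \<in> sets borel" "B \<subseteq> {0<..}" for B
    proof -
      note mirror1_B = m1.set_integral_mirror_image[OF G null1 that]
      have "m1.mirror ` B \<in> sets borel" "m1.mirror ` B \<subseteq> {0<..}"
        using mirror1_B m1.mirror_pos that(2) by auto
      note mirror2_B = m2.set_integral_mirror_image[OF G' null2' this]
      have "(LBINT s:m2.mirror ` m1.mirror ` B. G s) = - (LBINT s:m1.mirror ` B. G (- s))"
        using mirror2_B by simp
      also have "\<dots> = (LBINT s:B. G s)"
        using mirror1_B by simp
      finally show ?thesis
        using mirror2_B by (simp add: image_comp)
    qed
  qed
qed

lemma AE_lborel_uminus:
  fixes P :: "real \<Rightarrow> bool"
  assumes "Measurable.pred borel P" and "AE s in lborel. P (- s)"
  shows "AE s in lborel. P s"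
proof -
  have "{s \<in> space borel. P s} \<in> sets borel"
    using assms(1) by (simp add: pred_def)
  then have "AE s in distr lborel borel uminus. P s"
    using assms(2) by (subst AE_distr_iff) auto
  then show ?thesis
    by (metis lborel_distr_uminus)
qed

lemma AE_eq_0_if_null_pushforward_two_angles:
  fixes p \<theta>1 \<theta>2 :: real and G :: "real \<Rightarrow> real"
  assumes p: "p > 1" and \<theta>1: "0 < \<theta>1" "\<theta>1 < pi / 2" and \<theta>2: "- pi / 2 < \<theta>2" "\<theta>2 < 0"
    and G: "integrable lborel G"
    and null1: "null_pushforward (\<lambda>s. cos \<theta>1 * s + sin \<theta>1 * \<bar>s\<bar> powr p) G"
    and null2: "null_pushforward (\<lambda>s. cos \<theta>2 * s + sin \<theta>2 * \<bar>s\<bar> powr p) G"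
  shows "AE s in lborel. G s = 0"
proof -
  have pos: "cos \<theta>1 > 0" "sin \<theta>1 > 0" "cos \<theta>2 > 0" "- sin \<theta>2 > 0"
    using cos_gt_zero_pi[of \<theta>1] sin_gt_zero[of \<theta>1] cos_gt_zero_pi[of \<theta>2] sin_less_zero[of \<theta>2] \<theta>1 \<theta>2
    by auto
  have pos_half: "AE s in lborel. 0 < s \<longrightarrow> G s = 0"
    using null2 by (intro AE_pos_eq_0_if_null_pushforward_two_branches[OF p pos G null1]) simp
  have "AE s in lborel. 0 < s \<longrightarrow> G (- s) = 0"
  proof (rule AE_pos_eq_0_if_null_pushforward_two_branches[OF p pos(3,4,1,2)])
    show "integrable lborel (\<lambda>s. G (- s))"
      using G by (rule lborel_integrable_uminus)
    show "null_pushforward (\<lambda>s. cos \<theta>2 * s + - sin \<theta>2 * \<bar>s\<bar> powr p) (\<lambda>s. G (- s))"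
      using null_pushforward_reflect[OF null2] by simp
    show "null_pushforward (\<lambda>s. cos \<theta>1 * s - sin \<theta>1 * \<bar>s\<bar> powr p) (\<lambda>s. G (- s))"
      using null_pushforward_reflect[OF null1] by simp
  qed
  then have "AE s in lborel. - s < 0 \<longrightarrow> G (- s) = 0"
    by simp
  moreover have "Measurable.pred borel (\<lambda>s. s < 0 \<longrightarrow> G s = 0)"
    using borel_measurable_integrable[OF G] by measurable
  ultimately have "AE s in lborel. s < 0 \<longrightarrow> G s = 0"
    by (rule AE_lborel_uminus[rotated])
  then show ?thesis
    using AE_lborel_singleton[of 0] pos_half
  proof eventually_elim
    case (elim s)
    then show ?case
      by (cases "0 < s") auto
  qed
qed

lemma AE_eq_0_if_null_pushforward_bilipschitz:
  fixes \<theta> :: real and G :: "real \<Rightarrow> real"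
  assumes \<theta>: "\<bar>sin \<theta>\<bar> < cos \<theta>" and G: "integrable lborel G"
    and null: "null_pushforward (\<lambda>s. cos \<theta> * s + sin \<theta> * \<bar>s\<bar> powr 1) G"
  shows "AE s in lborel. G s = 0"
proof (rule AE_eq_0_if_null_pushforward_injective[OF G null])
  define k where "k u = (if 0 \<le> u then u / (cos \<theta> + sin \<theta>) else u / (cos \<theta> - sin \<theta>))" for u :: real
  show "k \<in> borel_measurable borel"
    unfolding k_def by measurable
  have "0 < cos \<theta> + sin \<theta>" "0 < cos \<theta> - sin \<theta>"
    using \<theta> by auto
  show "k (cos \<theta> * s + sin \<theta> * \<bar>s\<bar> powr 1) = s" for s
  proof (cases "0 \<le> s")
    case True
    then have "cos \<theta> * s + sin \<theta> * \<bar>s\<bar> powr 1 = (cos \<theta> + sin \<theta>) * s"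
      by (simp add: algebra_simps)
    then show ?thesis
      using True \<open>0 < cos \<theta> + sin \<theta>\<close> by (simp add: k_def)
  next
    case False
    then have "cos \<theta> * s + sin \<theta> * \<bar>s\<bar> powr 1 = (cos \<theta> - sin \<theta>) * s"
      by (simp add: algebra_simps)
    then show ?thesis
      using False mult_pos_neg[OF \<open>0 < cos \<theta> - sin \<theta>\<close>, of s] \<open>0 < cos \<theta> - sin \<theta>\<close>
      by (simp add: k_def)
  qed
qed

lemma sin_less_cos: "0 \<le> \<theta> \<Longrightarrow> \<theta> < pi / 4 \<Longrightarrow> sin \<theta> < cos \<theta>"
proof -
  assume "0 \<le> \<theta>" "\<theta> < pi / 4"
  then have "sin \<theta> < sin (pi / 4)" "cos (pi / 4) < cos \<theta>"
    by (simp_all add: sin_mono_less_eq cos_mono_less_eq)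
  then show ?thesis
    by (simp add: sin_45 cos_45)
qed

lemma HUP_two_lines:
  fixes p \<theta>1 \<theta>2 :: real
  assumes p: "p \<ge> 1" and \<theta>1: "0 < \<theta>1" "\<theta>1 < pi / 4" and \<theta>2: "- pi / 4 < \<theta>2" "\<theta>2 < 0"
  shows "HUP p (line \<theta>1 \<union> line \<theta>2)"
proof (rule HUP_if_parametrized_uniqueness)
  fix F :: "real \<Rightarrow> complex"
  assume F: "integrable lborel F"
    and vanishes: "\<And>x y. (x, y) \<in> line \<theta>1 \<union> line \<theta>2 \<Longrightarrow> (CLBINT s. F s * cis (- (x * s + y * \<bar>s\<bar> powr p))) = 0"
  have uniqueness: "AE s in lborel. G s = 0"
    if G: "integrable lborel G"
      and null1: "null_pushforward (\<lambda>s. cos \<theta>1 * s + sin \<theta>1 * \<bar>s\<bar> powr p) G"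
      and null2: "null_pushforward (\<lambda>s. cos \<theta>2 * s + sin \<theta>2 * \<bar>s\<bar> powr p) G" for G
  proof (cases "p = 1")
    case True
    have "\<bar>sin \<theta>1\<bar> < cos \<theta>1"
      using sin_less_cos[of \<theta>1] sin_gt_zero[of \<theta>1] \<theta>1 by simp
    then show ?thesis
      using null1 True by (intro AE_eq_0_if_null_pushforward_bilipschitz[OF _ G]) auto
  next
    case False
    then show ?thesis
      using p \<theta>1 \<theta>2 by (intro AE_eq_0_if_null_pushforward_two_angles[OF _ _ _ _ _ G null1 null2]) auto
  qed
  have "AE s in lborel. Re (F s) = 0" "AE s in lborel. Im (F s) = 0"
    using null_pushforward_if_fourier_vanishes_on_line[OF F, of \<theta>1 p]
      null_pushforward_if_fourier_vanishes_on_line[OF F, of \<theta>2 p] vanishes F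
    by (auto intro!: uniqueness)
  then show "AE s in lborel. F s = 0"
    by eventually_elim (simp add: complex_eq_iff)
qed

lemma lebesgue_open_rectangle:
  fixes a b c d :: real
  assumes "a \<le> b" "c \<le> d"
  shows "{a<..<b} \<times> {c<..<d} \<in> sets lebesgue"
    and "emeasure lebesgue ({a<..<b} \<times> {c<..<d}) = ennreal ((b - a) * (d - c))"
proof -
  have borel: "{a<..<b} \<times> {c<..<d} \<in> sets borel"
    by (intro borel_open open_Times) auto
  then show "{a<..<b} \<times> {c<..<d} \<in> sets lebesgue"
    by simp
  have "emeasure lebesgue ({a<..<b} \<times> {c<..<d}) = emeasure (lborel \<Otimes>\<^sub>M lborel) ({a<..<b} \<times> {c<..<d})"
    using borel by (simp add: emeasure_completion lborel_prod)
  also have "\<dots> = emeasure lborel {a<..<b} * emeasure lborel {c<..<d}"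
    by (intro sigma_finite_measure.emeasure_pair_measure_Times) (auto simp: lborel.sigma_finite_measure_axioms)
  finally show "emeasure lebesgue ({a<..<b} \<times> {c<..<d}) = ennreal ((b - a) * (d - c))"
    using assms by (simp add: ennreal_mult)
qed

theorem theorem3p4:
  fixes p :: real
  assumes "p \<ge> 1"
  shows "\<exists>E. E \<subseteq> {-pi/2..<pi/2} \<times> {-pi/2..<pi/2} \<and> E \<in> sets lebesgue \<and>
             emeasure lebesgue E > 0 \<and>
             (\<forall>(\<theta>1, \<theta>2)\<in>E. HUP p (line \<theta>1 \<union> line \<theta>2))"
proof (intro exI conjI)
  let ?E = "{0<..<pi/4} \<times> {-pi/4<..<0} :: (real \<times> real) set"
  show "?E \<subseteq> {-pi/2..<pi/2} \<times> {-pi/2..<pi/2}"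
    by auto
  show "?E \<in> sets lebesgue" "emeasure lebesgue ?E > 0"
    using lebesgue_open_rectangle[of 0 "pi/4" "-pi/4" 0] by simp_all
  show "\<forall>(\<theta>1, \<theta>2)\<in>?E. HUP p (line \<theta>1 \<union> line \<theta>2)"
    using assms by (auto intro!: HUP_two_lines)
qed

end
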